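(* Let $G$ be a connected graph with vertex set $\{u_1,\dots,u_n\}$, $n\ge2$, and let $\mathcal{H}=\{H_1,\dots,H_n\}$ be a family of non-empty graphs. Then $\dim_l(G\circ\mathcal{H})=n$ if and only if each true twin equivalence class of $G$ contains at most one vertex $u_i$ with $H_i\in\mathcal{G}$, and each $H_i$ is a bipartite graph having exactly one non-trivial connected component $H_i^*$, and this component has radius $r(H_i^* )\le2$.
   Context: All graphs are finite and simple with at least one vertex; non-empty means having at least one edge; a non-trivial connected component is one with at least two vertices. $d_G$ is shortest-path distance ($+\infty$ between components), $d_{G,2}=\min\{d_G,2\}$; $s$ distinguishes $x,y$ w.r.t. $d$ if $d(s,x)\ne d(s,y)$. $\dim_l(G)$: minimum size of $S\subseteq V(G)$ such that any two adjacent vertices are distinguished w.r.t. $d_G$ by some vertex of $S$. Local adjacency bases of $H$: minimum-size sets $S\subseteq V(H)$ such that any two adjacent vertices are distinguished w.r.t. $d_{H,2}$ by some vertex of $S$. $\mathcal{G}$: class of graphs $H$ such that every local adjacency basis $B$ of $H$ satisfies $B\subseteq N_H(v)$ for some $v\in V(H)$. True twins: $N[x]=N[y]$. Lexicographic product $G\circ\mathcal{H}$: vertex set $\bigcup_i\{u_i\}\times V(H_i)$, $(u_i,v)\sim(u_j,w)$ iff $u_iu_j\in E(G)$, or $i=j$ and $vw\in E(H_i)$. *)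

theory Defs
  imports Main "HOL-Library.Extended_Nat"
begin

definition graph :: "'a set \<Rightarrow> ('a \<Rightarrow> 'a \<Rightarrow> bool) \<Rightarrow> bool" where
  "graph V E \<longleftrightarrow> finite V \<and> V \<noteq> {} \<and>
     (\<forall>x y. E x y \<longrightarrow> x \<in> V \<and> y \<in> V) \<and>
     (\<forall>x y. E x y \<longrightarrow> E y x) \<and> (\<forall>x. \<not> E x x)"

definition nonempty_graph :: "'a set \<Rightarrow> ('a \<Rightarrow> 'a \<Rightarrow> bool) \<Rightarrow> bool" where
  "nonempty_graph V E \<longleftrightarrow> (\<exists>x y. E x y)"

definition walk_len :: "'a set \<Rightarrow> ('a \<Rightarrow> 'a \<Rightarrow> bool) \<Rightarrow> 'a \<Rightarrow> 'a \<Rightarrow> nat \<Rightarrow> bool" where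
  "walk_len V E x y n \<longleftrightarrow> (\<exists>xs. length xs = Suc n \<and> xs ! 0 = x \<and> xs ! n = y \<and>
      set xs \<subseteq> V \<and> (\<forall>i<n. E (xs ! i) (xs ! Suc i)))"

definition gdist :: "'a set \<Rightarrow> ('a \<Rightarrow> 'a \<Rightarrow> bool) \<Rightarrow> 'a \<Rightarrow> 'a \<Rightarrow> enat" where
  "gdist V E x y = Inf (enat ` {n. walk_len V E x y n})"

definition gdist2 :: "'a set \<Rightarrow> ('a \<Rightarrow> 'a \<Rightarrow> bool) \<Rightarrow> 'a \<Rightarrow> 'a \<Rightarrow> enat" where
  "gdist2 V E x y = min (gdist V E x y) 2"

definition connected_graph :: "'a set \<Rightarrow> ('a \<Rightarrow> 'a \<Rightarrow> bool) \<Rightarrow> bool" where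
  "connected_graph V E \<longleftrightarrow> (\<forall>x\<in>V. \<forall>y\<in>V. gdist V E x y \<noteq> \<infinity>)"

definition local_resolving :: "'a set \<Rightarrow> ('a \<Rightarrow> 'a \<Rightarrow> bool) \<Rightarrow> 'a set \<Rightarrow> bool" where
  "local_resolving V E S \<longleftrightarrow> S \<subseteq> V \<and>
     (\<forall>x y. E x y \<longrightarrow> (\<exists>s\<in>S. gdist V E s x \<noteq> gdist V E s y))"

definition local_metric_dim :: "'a set \<Rightarrow> ('a \<Rightarrow> 'a \<Rightarrow> bool) \<Rightarrow> nat" where
  "local_metric_dim V E = (LEAST k. \<exists>S. local_resolving V E S \<and> card S = k)"

definition local_adj_resolving :: "'a set \<Rightarrow> ('a \<Rightarrow> 'a \<Rightarrow> bool) \<Rightarrow> 'a set \<Rightarrow> bool" where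
  "local_adj_resolving V E S \<longleftrightarrow> S \<subseteq> V \<and>
     (\<forall>x y. E x y \<longrightarrow> (\<exists>s\<in>S. gdist2 V E s x \<noteq> gdist2 V E s y))"

definition local_adj_basis :: "'a set \<Rightarrow> ('a \<Rightarrow> 'a \<Rightarrow> bool) \<Rightarrow> 'a set \<Rightarrow> bool" where
  "local_adj_basis V E B \<longleftrightarrow> local_adj_resolving V E B \<and>
     (\<forall>S. local_adj_resolving V E S \<longrightarrow> card B \<le> card S)"

definition in_class_G :: "'a set \<Rightarrow> ('a \<Rightarrow> 'a \<Rightarrow> bool) \<Rightarrow> bool" where
  "in_class_G V E \<longleftrightarrow> (\<forall>B. local_adj_basis V E B \<longrightarrow> (\<exists>v\<in>V. B \<subseteq> {w. E v w}))"

definition closed_nbhd :: "'a set \<Rightarrow> ('a \<Rightarrow> 'a \<Rightarrow> bool) \<Rightarrow> 'a \<Rightarrow> 'a set" where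
  "closed_nbhd V E x = insert x {y\<in>V. E x y}"

definition twin_class :: "'a set \<Rightarrow> ('a \<Rightarrow> 'a \<Rightarrow> bool) \<Rightarrow> 'a \<Rightarrow> 'a set" where
  "twin_class V E u = {v\<in>V. closed_nbhd V E v = closed_nbhd V E u}"

definition bipartite :: "'a set \<Rightarrow> ('a \<Rightarrow> 'a \<Rightarrow> bool) \<Rightarrow> bool" where
  "bipartite V E \<longleftrightarrow> (\<exists>A\<subseteq>V. \<forall>x y. E x y \<longrightarrow> (x \<in> A \<longleftrightarrow> y \<notin> A))"

definition component :: "'a set \<Rightarrow> ('a \<Rightarrow> 'a \<Rightarrow> bool) \<Rightarrow> 'a set \<Rightarrow> bool" where
  "component V E C \<longleftrightarrow> (\<exists>x\<in>V. C = {y\<in>V. gdist V E x y \<noteq> \<infinity>})"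

definition induced :: "('a \<Rightarrow> 'a \<Rightarrow> bool) \<Rightarrow> 'a set \<Rightarrow> 'a \<Rightarrow> 'a \<Rightarrow> bool" where
  "induced E C x y \<longleftrightarrow> E x y \<and> x \<in> C \<and> y \<in> C"

definition eccentricity :: "'a set \<Rightarrow> ('a \<Rightarrow> 'a \<Rightarrow> bool) \<Rightarrow> 'a \<Rightarrow> enat" where
  "eccentricity V E v = Max ((gdist V E v) ` V)"

definition radius :: "'a set \<Rightarrow> ('a \<Rightarrow> 'a \<Rightarrow> bool) \<Rightarrow> enat" where
  "radius V E = Min ((eccentricity V E) ` V)"

text \<open>Lexicographic product G \<circ> \<H>, with H_u = (VH u, EH u) attached to vertex u.\<close>
definition lex_V :: "'a set \<Rightarrow> ('a \<Rightarrow> 'b set) \<Rightarrow> ('a \<times> 'b) set" where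
  "lex_V V VH = Sigma V VH"

definition lex_E :: "'a set \<Rightarrow> ('a \<Rightarrow> 'a \<Rightarrow> bool) \<Rightarrow> ('a \<Rightarrow> 'b set) \<Rightarrow> ('a \<Rightarrow> 'b \<Rightarrow> 'b \<Rightarrow> bool)
     \<Rightarrow> 'a \<times> 'b \<Rightarrow> 'a \<times> 'b \<Rightarrow> bool" where
  "lex_E V E VH EH p q \<longleftrightarrow> p \<in> Sigma V VH \<and> q \<in> Sigma V VH \<and>
     (E (fst p) (fst q) \<or> (fst p = fst q \<and> EH (fst p) (snd p) (snd q)))"

end

theory Submission
  imports Defs
begin

text \<open>A local resolving set of the lexicographic product meets every layer \<open>{u} \<times> V(H\<^sub>u)\<close>,
  because from outside a layer both ends of an edge inside it are at the same distance. So it has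
  at least \<open>n\<close> vertices, and with exactly \<open>n\<close> it has one vertex \<open>(u, t\<^sub>u)\<close> per layer. Distances
  inside a layer are the truncated distances \<open>d\<^sub>H\<^sub>,\<^sub>2\<close>, so \<open>t\<^sub>u\<close> alone resolves the edges of
  \<open>H\<^sub>u\<close>; graphs with such a vertex are exactly the bipartite graphs with one non-trivial component,
  of radius at most 2 (the vertex is a centre; conversely the parity of distances from a centre
  separates the ends of every edge). For adjacent true twins \<open>u, v\<close> and neighbours \<open>a\<close> of \<open>t\<^sub>u\<close>,
  \<open>b\<close> of \<open>t\<^sub>v\<close>, no vertex resolves the edge \<open>(u, a)(v, b)\<close>. Conversely, without true twins the
  vertices \<open>(u, t\<^sub>u)\<close> resolve every edge; adjacent non-twins are separated by the layer of a vertex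
  adjacent to exactly one of them. Finally, a vertex resolving a graph with an edge has a neighbour,
  so every \<open>H\<^sub>u\<close> satisfying the conditions lies in \<open>\<G>\<close>, and the twin-class condition just says
  that \<open>G\<close> has no true twins.\<close>

lemma graphD:
  assumes "graph V E"
  shows "finite V" and "E x y \<Longrightarrow> x \<in> V" and "E x y \<Longrightarrow> y \<in> V"
    and "E x y \<Longrightarrow> E y x" and "\<not> E x x"
  using assms unfolding graph_def by auto

subsection \<open>Walks and distances\<close>

lemma walk_len_0_iff: "walk_len V E x y 0 \<longleftrightarrow> x = y \<and> x \<in> V"
proof
  assume "walk_len V E x y 0"
  then obtain xs where "length xs = Suc 0" "xs ! 0 = x" "xs ! 0 = y" "set xs \<subseteq> V"
    unfolding walk_len_def by auto
  then show "x = y \<and> x \<in> V" by (metis nth_mem subsetD zero_less_Suc)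
next
  assume "x = y \<and> x \<in> V"
  then show "walk_len V E x y 0" unfolding walk_len_def by (intro exI[of _ "[x]"]) auto
qed

lemma walk_len_Suc_iff:
  "walk_len V E x z (Suc n) \<longleftrightarrow> (\<exists>y. walk_len V E x y n \<and> E y z \<and> z \<in> V)"
proof
  assume "walk_len V E x z (Suc n)"
  then obtain xs where xs: "length xs = Suc (Suc n)" "xs ! 0 = x" "xs ! Suc n = z"
      "set xs \<subseteq> V" "\<forall>i<Suc n. E (xs ! i) (xs ! Suc i)"
    unfolding walk_len_def by blast
  have "set (take (Suc n) xs) \<subseteq> V" using xs(4) by (meson set_take_subset order_trans)
  then have "walk_len V E x (xs ! n) n"
    unfolding walk_len_def using xs by (intro exI[of _ "take (Suc n) xs"]) auto
  moreover have "z \<in> V" using xs by (metis lessI nth_mem subsetD)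
  ultimately show "\<exists>y. walk_len V E x y n \<and> E y z \<and> z \<in> V" using xs by blast
next
  assume "\<exists>y. walk_len V E x y n \<and> E y z \<and> z \<in> V"
  then obtain y ys where ys: "length ys = Suc n" "ys ! 0 = x" "ys ! n = y"
      "set ys \<subseteq> V" "\<forall>i<n. E (ys ! i) (ys ! Suc i)" and yz: "E y z" "z \<in> V"
    unfolding walk_len_def by blast
  have "\<forall>i<Suc n. E ((ys @ [z]) ! i) ((ys @ [z]) ! Suc i)"
    using ys yz by (auto simp: nth_append less_Suc_eq)
  then show "walk_len V E x z (Suc n)"
    unfolding walk_len_def using ys yz by (intro exI[of _ "ys @ [z]"]) (auto simp: nth_append)
qed

lemma walk_len_in_V: "walk_len V E x y n \<Longrightarrow> y \<in> V"
  by (cases n) (auto simp: walk_len_0_iff walk_len_Suc_iff)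

lemma walk_len_1_iff: "walk_len V E x y (Suc 0) \<longleftrightarrow> x \<in> V \<and> E x y \<and> y \<in> V"
  by (auto simp: walk_len_Suc_iff walk_len_0_iff)

lemma walk_len_append:
  "walk_len V E x y m \<Longrightarrow> walk_len V E y z n \<Longrightarrow> walk_len V E x z (m + n)"
  by (induction n arbitrary: z) (auto simp: walk_len_0_iff walk_len_Suc_iff)

lemma walk_len_sym:
  assumes "graph V E" and "walk_len V E x y n"
  shows "walk_len V E y x n"
  using assms(2)
proof (induction n arbitrary: y)
  case 0
  then show ?case by (auto simp: walk_len_0_iff)
next
  case (Suc n)
  then obtain p where p: "walk_len V E x p n" "E p y" by (auto simp: walk_len_Suc_iff)
  have "walk_len V E y p (Suc 0)"
    using p(2) graphD[OF assms(1)] by (simp add: walk_len_1_iff)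
  from walk_len_append[OF this Suc.IH[OF p(1)]] show ?case by simp
qed

lemma gdist_eq_Least: "gdist V E x y = (if \<exists>n. walk_len V E x y n
   then enat (LEAST n. walk_len V E x y n) else \<infinity>)"
proof (cases "\<exists>n. walk_len V E x y n")
  case True
  define m where "m = (LEAST n. walk_len V E x y n)"
  have "walk_len V E x y m" unfolding m_def using True by (metis LeastI)
  then have "gdist V E x y = enat m"
    unfolding gdist_def
    by (intro antisym Inf_lower Inf_greatest) (auto simp: m_def intro: Least_le)
  then show ?thesis using True m_def by simp
next
  case False
  then show ?thesis by (simp add: gdist_def top_enat_def)
qed

lemma gdist_le_walk: "walk_len V E x y n \<Longrightarrow> gdist V E x y \<le> enat n"
  unfolding gdist_def by (auto intro: Inf_lower)

lemma walk_len_gdist: "gdist V E x y = enat n \<Longrightarrow> walk_len V E x y n"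
  by (subst (asm) gdist_eq_Least) (auto split: if_splits intro: LeastI)

lemma gdist_eq_infinity_iff: "gdist V E x y = \<infinity> \<longleftrightarrow> (\<forall>n. \<not> walk_len V E x y n)"
  by (subst gdist_eq_Least) auto

lemma gdist_le_enat_iff: "gdist V E x y \<le> enat n \<longleftrightarrow> (\<exists>m\<le>n. walk_len V E x y m)"
proof
  assume "gdist V E x y \<le> enat n"
  then obtain m where "gdist V E x y = enat m" "m \<le> n"
    by (cases "gdist V E x y") auto
  then show "\<exists>m\<le>n. walk_len V E x y m" using walk_len_gdist[of V E x y m] by blast
next
  assume "\<exists>m\<le>n. walk_len V E x y m"
  then show "gdist V E x y \<le> enat n" by (meson gdist_le_walk enat_ord_simps(1) order_trans)
qed

lemma gdist_mono_walks:
  assumes "\<And>n. walk_len V E x y n \<Longrightarrow> \<exists>m\<le>n. walk_len V E x z m"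
  shows "gdist V E x z \<le> gdist V E x y"
proof (cases "gdist V E x y")
  case (enat n)
  then show ?thesis using assms[OF walk_len_gdist[OF enat]] by (simp add: gdist_le_enat_iff)
qed simp

lemma gdist_eq_0_iff: "gdist V E x y = 0 \<longleftrightarrow> x = y \<and> x \<in> V"
  using gdist_le_enat_iff[of V E x y 0] by (simp add: zero_enat_def[symmetric] walk_len_0_iff)

lemma gdist_eq_1_iff:
  assumes "graph V E"
  shows "gdist V E x y = 1 \<longleftrightarrow> E x y"
proof -
  have "gdist V E x y = 1 \<longleftrightarrow> gdist V E x y \<le> enat 1 \<and> \<not> gdist V E x y \<le> enat 0"
    by (cases "gdist V E x y") (auto simp: one_enat_def)
  also have "\<dots> \<longleftrightarrow> walk_len V E x y (Suc 0) \<and> \<not> walk_len V E x y 0"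
    by (auto simp: gdist_le_enat_iff le_Suc_eq)
  also have "\<dots> \<longleftrightarrow> E x y"
    using graphD[OF assms] by (auto simp: walk_len_1_iff walk_len_0_iff)
  finally show ?thesis .
qed

lemma gdist2_eq:
  assumes "graph V E"
  shows "gdist2 V E x y = (if x = y \<and> x \<in> V then 0 else if E x y then 1 else 2)"
proof -
  have "min d 2 = (if d = 0 then 0 else if d = 1 then 1 else 2)" for d :: enat
  proof (cases d)
    case (enat k)
    then show ?thesis
      by (cases k) (auto simp: zero_enat_def one_enat_def numeral_eq_enat min_def)
  qed simp
  then show ?thesis
    unfolding gdist2_def using gdist_eq_0_iff gdist_eq_1_iff[OF assms] by metis
qed

lemma gdist_finite_sym:
  "graph V E \<Longrightarrow> gdist V E x y \<noteq> \<infinity> \<Longrightarrow> gdist V E y x \<noteq> \<infinity>"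
  using walk_len_sym by (metis gdist_eq_infinity_iff)

lemma gdist_finite_trans:
  "gdist V E x y \<noteq> \<infinity> \<Longrightarrow> gdist V E y z \<noteq> \<infinity> \<Longrightarrow> gdist V E x z \<noteq> \<infinity>"
  using walk_len_append by (metis gdist_eq_infinity_iff)

lemma gdist_finite_imp_neighbour:
  assumes "gdist V E x y \<noteq> \<infinity>" and "x \<noteq> y"
  obtains z where "E z y"
proof -
  obtain n where "walk_len V E x y n" using assms(1) by (auto simp: gdist_eq_infinity_iff)
  with assms(2) show ?thesis
    using that by (cases n) (auto simp: walk_len_0_iff walk_len_Suc_iff)
qed

lemma walk_len_parity:
  assumes "\<forall>x y. E x y \<longrightarrow> (x \<in> A \<longleftrightarrow> y \<notin> A)" and "walk_len V E x y n"
  shows "(y \<in> A \<longleftrightarrow> x \<in> A) \<longleftrightarrow> even n"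
  using assms(2)
proof (induction n arbitrary: y)
  case 0
  then show ?case by (auto simp: walk_len_0_iff)
next
  case (Suc n)
  then obtain p where p: "walk_len V E x p n" "E p y" by (auto simp: walk_len_Suc_iff)
  have "p \<in> A \<longleftrightarrow> y \<notin> A" using assms(1) p(2) by blast
  with Suc.IH[OF p(1)] show ?case by simp blast
qed

lemma walk_len_induced_imp_walk_len:
  "C \<subseteq> V \<Longrightarrow> walk_len C (induced E C) x y n \<Longrightarrow> walk_len V E x y n"
  by (induction n arbitrary: y) (auto simp: walk_len_0_iff walk_len_Suc_iff induced_def)

lemma gdist_le_gdist_induced:
  assumes "C \<subseteq> V"
  shows "gdist V E x y \<le> gdist C (induced E C) x y"
proof (cases "gdist C (induced E C) x y")
  case (enat n)
  then have "walk_len V E x y n" by (rule walk_len_induced_imp_walk_len[OF assms walk_len_gdist])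
  then show ?thesis using enat by (simp add: gdist_le_walk)
qed simp

lemma walk_len_induced_reachable:
  fixes V :: "'a set" and E :: "'a \<Rightarrow> 'a \<Rightarrow> bool" and x :: 'a
  defines "R \<equiv> {z \<in> V. gdist V E x z \<noteq> \<infinity>}"
  shows "walk_len V E x y n \<Longrightarrow> walk_len R (induced E R) x y n"
proof (induction n arbitrary: y)
  case 0
  then show ?case by (auto simp: walk_len_0_iff R_def gdist_eq_0_iff[THEN iffD2] zero_enat_def)
next
  case (Suc n)
  then obtain p where p: "walk_len V E x p n" "E p y" "y \<in> V" by (auto simp: walk_len_Suc_iff)
  have "p \<in> R" using p(1) walk_len_in_V[OF p(1)] unfolding R_def gdist_eq_infinity_iff by blast
  moreover have "y \<in> R"
    using Suc.prems walk_len_in_V[OF Suc.prems] unfolding R_def gdist_eq_infinity_iff by blast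
  ultimately show ?case using Suc.IH[OF p(1)] p by (auto simp: walk_len_Suc_iff induced_def)
qed

lemma gdist_induced_reachable_le:
  fixes V :: "'a set" and E :: "'a \<Rightarrow> 'a \<Rightarrow> bool" and x :: 'a
  defines "R \<equiv> {z \<in> V. gdist V E x z \<noteq> \<infinity>}"
  shows "gdist R (induced E R) x y \<le> gdist V E x y"
proof (cases "gdist V E x y")
  case (enat n)
  then have "walk_len R (induced E R) x y n"
    unfolding R_def by (rule walk_len_induced_reachable[OF walk_len_gdist])
  then show ?thesis using enat by (simp add: gdist_le_walk)
qed simp

subsection \<open>Components and radius\<close>

lemma component_eq_reachable:
  assumes "graph V E" and "component V E C" and "x \<in> C"
  shows "C = {y \<in> V. gdist V E x y \<noteq> \<infinity>}"
proof -
  obtain x0 where x0: "C = {y \<in> V. gdist V E x0 y \<noteq> \<infinity>}"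
    using assms(2) unfolding component_def by blast
  with assms(3) have "gdist V E x0 x \<noteq> \<infinity>" by blast
  then have "gdist V E x0 y \<noteq> \<infinity> \<longleftrightarrow> gdist V E x y \<noteq> \<infinity>" for y
    using gdist_finite_trans gdist_finite_sym[OF assms(1)] by metis
  then show ?thesis using x0 by auto
qed

lemma edge_in_nontrivial_component:
  fixes V :: "'a set" and E :: "'a \<Rightarrow> 'a \<Rightarrow> bool" and x :: 'a
  assumes "graph V E" and "E x y"
  defines "C \<equiv> {z \<in> V. gdist V E x z \<noteq> \<infinity>}"
  shows "component V E C" and "2 \<le> card C" and "x \<in> C" and "y \<in> C"
proof -
  have xy: "x \<in> V" "y \<in> V" "x \<noteq> y" using graphD(2,3,5)[OF assms(1)] assms(2) by metis+
  show "component V E C" unfolding component_def C_def using xy by blast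
  show "x \<in> C" unfolding C_def using xy gdist_eq_0_iff[of V E x x] by (simp add: zero_enat_def)
  show "y \<in> C"
    unfolding C_def using xy(2) gdist_eq_1_iff[OF assms(1), of x y] assms(2) by (simp add: one_enat_def)
  have "finite C" unfolding C_def using graphD(1)[OF assms(1)] by simp
  then show "2 \<le> card C" using card_mono[of C "{x, y}"] \<open>x \<in> C\<close> \<open>y \<in> C\<close> xy by simp
qed

lemma nontrivial_component_has_edge:
  assumes "graph V E" and "component V E C" and "2 \<le> card C"
  obtains x y where "x \<in> C" and "E x y"
proof -
  obtain x0 where x0: "C = {y \<in> V. gdist V E x0 y \<noteq> \<infinity>}"
    using assms(2) unfolding component_def by blast
  have "\<not> C \<subseteq> {x0}" using assms(3) card_mono[of "{x0}" C] by auto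
  then obtain x where "x \<in> C" "x \<noteq> x0" by blast
  moreover obtain z where "E z x"
    using gdist_finite_imp_neighbour x0 \<open>x \<in> C\<close> \<open>x \<noteq> x0\<close> by (metis (mono_tags) mem_Collect_eq)
  ultimately show ?thesis using that graphD(4)[OF assms(1)] by blast
qed

lemma radius_le_iff:
  assumes "finite C" and "C \<noteq> {}"
  shows "radius C E \<le> r \<longleftrightarrow> (\<exists>s\<in>C. \<forall>y\<in>C. gdist C E s y \<le> r)"
  unfolding radius_def eccentricity_def using assms by (simp add: Min_le_iff)

subsection \<open>Graphs of local adjacency dimension one\<close>

lemma local_adj_resolving_nonempty:
  "nonempty_graph V E \<Longrightarrow> local_adj_resolving V E B \<Longrightarrow> B \<noteq> {}"
  unfolding nonempty_graph_def local_adj_resolving_def by blast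

lemma local_adj_resolving_singleton_dominates:
  assumes "graph V E" and "local_adj_resolving V E {s}" and "E x y"
  shows "x \<in> closed_nbhd V E s \<or> y \<in> closed_nbhd V E s"
proof -
  have "gdist2 V E s x \<noteq> gdist2 V E s y"
    using assms(2,3) unfolding local_adj_resolving_def by blast
  then show ?thesis
    using graphD(2,3)[OF assms(1,3)] unfolding gdist2_eq[OF assms(1)] closed_nbhd_def
    by (auto split: if_splits)
qed

lemma local_adj_resolving_singleton_neighbour:
  assumes "graph V E" and "nonempty_graph V E" and "local_adj_resolving V E {s}"
  obtains v where "E v s"
proof -
  obtain x y where "E x y" using assms(2) unfolding nonempty_graph_def by blast
  then show ?thesis
    using local_adj_resolving_singleton_dominates[OF assms(1,3)] that graphD(4)[OF assms(1)]
    unfolding closed_nbhd_def by blast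
qed

lemma local_adj_resolving_singleton_gdist_le_2:
  assumes "graph V E" and "local_adj_resolving V E {s}" and "E x y"
  shows "gdist V E s x \<le> 2"
proof -
  have sV: "s \<in> V" using assms(2) unfolding local_adj_resolving_def by simp
  note edge = graphD(2,3,4)[OF assms(1,3)]
  consider "x = s" | "E s x" | "y = s" | "E s y"
    using local_adj_resolving_singleton_dominates[OF assms] unfolding closed_nbhd_def by blast
  then have "\<exists>m\<le>2. walk_len V E s x m"
  proof cases
    case 1
    then show ?thesis using sV by (intro exI[of _ 0]) (simp add: walk_len_0_iff)
  next
    case 2
    then show ?thesis using sV edge by (intro exI[of _ 1]) (simp add: walk_len_1_iff)
  next
    case 3
    then show ?thesis using sV edge by (intro exI[of _ 1]) (simp add: walk_len_1_iff)
  next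
    case 4
    then have "walk_len V E s y (Suc 0)" using sV edge by (simp add: walk_len_1_iff)
    then have "walk_len V E s x (Suc (Suc 0))" using edge walk_len_Suc_iff by metis
    then show ?thesis by (intro exI[of _ 2]) (simp add: numeral_2_eq_2)
  qed
  then show ?thesis using gdist_le_enat_iff by (metis numeral_eq_enat)
qed

lemma local_adj_resolving_singleton_imp_bipartite:
  assumes g: "graph V E" and res: "local_adj_resolving V E {s}"
  shows "bipartite V E"
  unfolding bipartite_def
proof (intro exI[of _ "{x \<in> V. E s x}"] conjI allI impI)
  fix x y assume "E x y"
  moreover from this have "gdist2 V E s x \<noteq> gdist2 V E s y"
    using res unfolding local_adj_resolving_def by blast
  ultimately show "x \<in> {x \<in> V. E s x} \<longleftrightarrow> y \<notin> {x \<in> V. E s x}"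
    using graphD(2-5)[OF g] unfolding gdist2_eq[OF g] by (auto split: if_splits)
qed auto

lemma local_adj_resolving_singleton_nontrivial_component_iff:
  assumes g: "graph V E" and ne: "nonempty_graph V E" and res: "local_adj_resolving V E {s}"
  shows "component V E C \<and> 2 \<le> card C \<longleftrightarrow> C = {y \<in> V. gdist V E s y \<noteq> \<infinity>}"
proof -
  define R where "R = {y \<in> V. gdist V E s y \<noteq> \<infinity>}"
  have R: "component V E R"
    using res unfolding R_def component_def local_adj_resolving_def by blast
  have uniq: "D = R" if D: "component V E D" "2 \<le> card D" for D
  proof -
    obtain x y where "x \<in> D" "E x y" using nontrivial_component_has_edge[OF g D] .
    moreover from this have "gdist V E s x \<le> 2"
      using local_adj_resolving_singleton_gdist_le_2[OF g res] by blast
    ultimately have "x \<in> R"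
      unfolding R_def using graphD(2)[OF g] by (cases "gdist V E s x") (auto simp: numeral_eq_enat)
    then show "D = R"
      using component_eq_reachable[OF g D(1) \<open>x \<in> D\<close>] component_eq_reachable[OF g R] by simp
  qed
  obtain x y where e: "E x y" using ne unfolding nonempty_graph_def by blast
  have "{z \<in> V. gdist V E x z \<noteq> \<infinity>} = R"
    by (rule uniq[OF edge_in_nontrivial_component(1,2)[OF g e]])
  then have "2 \<le> card R" using edge_in_nontrivial_component(2)[OF g e] by simp
  then show ?thesis using uniq R unfolding R_def by blast
qed

lemma local_adj_resolving_singleton_radius_le_2:
  fixes V :: "'a set" and E :: "'a \<Rightarrow> 'a \<Rightarrow> bool"
  assumes g: "graph V E" and res: "local_adj_resolving V E {s}"
  defines "R \<equiv> {y \<in> V. gdist V E s y \<noteq> \<infinity>}"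
  shows "radius R (induced E R) \<le> 2"
proof -
  have R: "finite R" "s \<in> R"
    using res graphD(1)[OF g] gdist_eq_0_iff[of V E s s]
    unfolding R_def local_adj_resolving_def by (auto simp: zero_enat_def)
  have "gdist R (induced E R) s y \<le> 2" if y: "y \<in> R" for y
  proof (cases "y = s")
    case True
    then show ?thesis using R(2) gdist_eq_0_iff[of R "induced E R" s s] by simp
  next
    case False
    moreover have "gdist V E s y \<noteq> \<infinity>" using y unfolding R_def by blast
    ultimately obtain z where "E z y" using gdist_finite_imp_neighbour by metis
    then have "gdist V E s y \<le> 2"
      using local_adj_resolving_singleton_gdist_le_2[OF g res] graphD(4)[OF g] by blast
    then show ?thesis
      using order_trans[OF gdist_induced_reachable_le[of V E s y]] unfolding R_def by blast
  qed
  then show ?thesis using radius_le_iff[OF R(1)] R(2) by blast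
qed

lemma bipartite_radius_le_2_imp_local_adj_resolving_singleton:
  fixes V :: "'a set" and E :: "'a \<Rightarrow> 'a \<Rightarrow> bool"
  assumes g: "graph V E" and bip: "bipartite V E"
    and ex: "\<exists>!C. component V E C \<and> 2 \<le> card C"
    and rad: "\<forall>C. component V E C \<and> 2 \<le> card C \<longrightarrow> radius C (induced E C) \<le> 2"
  obtains s where "local_adj_resolving V E {s}"
proof -
  obtain C where C: "component V E C" "2 \<le> card C" using ex by blast
  have uniq: "D = C" if "component V E D" "2 \<le> card D" for D using ex C that by blast
  have CV: "C \<subseteq> V" using C(1) unfolding component_def by auto
  have "finite C" "C \<noteq> {}" using C(2) card.infinite by fastforce+
  then obtain s where s: "s \<in> C" "\<forall>y\<in>C. gdist C (induced E C) s y \<le> 2"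
    using rad C radius_le_iff by blast
  obtain A where A: "\<forall>x y. E x y \<longrightarrow> (x \<in> A \<longleftrightarrow> y \<notin> A)"
    using bip unfolding bipartite_def by blast
  have near: "\<exists>m\<le>2. gdist V E s x = enat m" if "x \<in> C" for x
  proof -
    have "gdist V E s x \<le> gdist C (induced E C) s x" by (rule gdist_le_gdist_induced[OF CV])
    also have "\<dots> \<le> 2" using s(2) that by blast
    finally show ?thesis by (cases "gdist V E s x") (auto simp: numeral_eq_enat)
  qed
  have "gdist2 V E s x \<noteq> gdist2 V E s y" if e: "E x y" for x y
  proof -
    have "{z \<in> V. gdist V E x z \<noteq> \<infinity>} = C"
      by (rule uniq[OF edge_in_nontrivial_component(1,2)[OF g e]])
    then have "x \<in> C" "y \<in> C" using edge_in_nontrivial_component(3,4)[OF g e] by auto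
    then obtain m m' where m: "m \<le> 2" "gdist V E s x = enat m"
      and m': "m' \<le> 2" "gdist V E s y = enat m'" using near by blast
    have "x \<in> A \<longleftrightarrow> y \<notin> A" using A e by blast
    then have "m \<noteq> m'"
      using walk_len_parity[OF A walk_len_gdist[OF m(2)]] walk_len_parity[OF A walk_len_gdist[OF m'(2)]]
      by auto
    then show ?thesis using m m' unfolding gdist2_def by (auto simp: min_def numeral_eq_enat)
  qed
  then show ?thesis using that s(1) CV unfolding local_adj_resolving_def by blast
qed

lemma local_adj_resolving_singleton_iff:
  assumes "graph V E" and "nonempty_graph V E"
  shows "(\<exists>s. local_adj_resolving V E {s}) \<longleftrightarrow> bipartite V E \<and>
    (\<exists>!C. component V E C \<and> 2 \<le> card C) \<and>
    (\<forall>C. component V E C \<and> 2 \<le> card C \<longrightarrow> radius C (induced E C) \<le> 2)"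
proof
  assume "\<exists>s. local_adj_resolving V E {s}"
  then obtain s where res: "local_adj_resolving V E {s}" ..
  then show "bipartite V E \<and> (\<exists>!C. component V E C \<and> 2 \<le> card C) \<and>
      (\<forall>C. component V E C \<and> 2 \<le> card C \<longrightarrow> radius C (induced E C) \<le> 2)"
    using local_adj_resolving_singleton_imp_bipartite[OF assms(1) res]
      local_adj_resolving_singleton_radius_le_2[OF assms(1) res]
    by (simp add: local_adj_resolving_singleton_nontrivial_component_iff[OF assms res])
next
  assume "bipartite V E \<and> (\<exists>!C. component V E C \<and> 2 \<le> card C) \<and>
      (\<forall>C. component V E C \<and> 2 \<le> card C \<longrightarrow> radius C (induced E C) \<le> 2)"
  then show "\<exists>s. local_adj_resolving V E {s}"
    by (elim conjE) (rule bipartite_radius_le_2_imp_local_adj_resolving_singleton[OF assms(1)], assumption+, blast)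
qed

lemma in_class_G_if_local_adj_resolving_singleton:
  assumes g: "graph V E" and ne: "nonempty_graph V E" and res: "local_adj_resolving V E {s}"
  shows "in_class_G V E"
  unfolding in_class_G_def
proof (intro allI impI)
  fix B assume B: "local_adj_basis V E B"
  then have "local_adj_resolving V E B" "card B \<le> 1"
    using res unfolding local_adj_basis_def by auto
  moreover from this have "finite B" "B \<noteq> {}"
    using graphD(1)[OF g] local_adj_resolving_nonempty[OF ne] finite_subset
    unfolding local_adj_resolving_def by blast+
  moreover from this have "card B = 1" using \<open>card B \<le> 1\<close> by (simp add: le_Suc_eq)
  ultimately obtain t where t: "B = {t}" "local_adj_resolving V E {t}"
    by (metis card_1_singletonE)
  then obtain v where "E v t" using local_adj_resolving_singleton_neighbour[OF g ne] by blast
  then show "\<exists>v\<in>V. B \<subseteq> {w. E v w}" using t(1) graphD(2)[OF g] by blast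
qed

subsection \<open>True twins\<close>

lemma card_twin_class_Collect_le_1:
  assumes "twin_class V E u = {u}"
  shows "card {v \<in> twin_class V E u. P v} \<le> 1"
proof -
  have "card {v \<in> twin_class V E u. P v} \<le> card {u}"
    using assms by (intro card_mono) auto
  then show ?thesis by simp
qed

lemma twin_class_eq_singleton_iff:
  assumes "graph V E" and "u \<in> V" and "\<forall>v\<in>V. P v"
  shows "twin_class V E u = {u} \<longleftrightarrow> card {v \<in> twin_class V E u. P v} \<le> 1"
proof -
  have "{v \<in> twin_class V E u. P v} = twin_class V E u"
    using assms(3) unfolding twin_class_def by auto
  moreover have "finite (twin_class V E u)" "u \<in> twin_class V E u"
    using graphD(1)[OF assms(1)] assms(2) unfolding twin_class_def by auto
  ultimately show ?thesis using card_le_Suc0_iff_eq by fastforce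
qed

lemma true_twin_adjacent:
  assumes "v \<in> twin_class V E u" and "v \<noteq> u"
  shows "E u v"
  using assms unfolding twin_class_def closed_nbhd_def by blast

lemma closed_nbhd_eq_iff:
  assumes "graph V E" and "E u v"
  shows "closed_nbhd V E u = closed_nbhd V E v \<longleftrightarrow>
    (\<forall>z. z \<noteq> u \<and> z \<noteq> v \<longrightarrow> (E z u \<longleftrightarrow> E z v))"
proof
  assume eq: "closed_nbhd V E u = closed_nbhd V E v"
  show "\<forall>z. z \<noteq> u \<and> z \<noteq> v \<longrightarrow> (E z u \<longleftrightarrow> E z v)"
  proof (intro allI impI)
    fix z assume z: "z \<noteq> u \<and> z \<noteq> v"
    have "E z u \<longleftrightarrow> z \<in> closed_nbhd V E u"
      using z graphD(2,4)[OF assms(1)] unfolding closed_nbhd_def by blast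
    also have "\<dots> \<longleftrightarrow> z \<in> closed_nbhd V E v" using eq by simp
    also have "\<dots> \<longleftrightarrow> E z v"
      using z graphD(2,4)[OF assms(1)] unfolding closed_nbhd_def by blast
    finally show "E z u \<longleftrightarrow> E z v" .
  qed
next
  assume "\<forall>z. z \<noteq> u \<and> z \<noteq> v \<longrightarrow> (E z u \<longleftrightarrow> E z v)"
  then show "closed_nbhd V E u = closed_nbhd V E v"
    using assms(2) graphD(2-5)[OF assms(1)] unfolding closed_nbhd_def by (auto; metis)
qed

subsection \<open>Lexicographic products\<close>

locale lex_product =
  fixes V :: "'a set" and E :: "'a \<Rightarrow> 'a \<Rightarrow> bool"
    and VH :: "'a \<Rightarrow> 'b set" and EH :: "'a \<Rightarrow> 'b \<Rightarrow> 'b \<Rightarrow> bool"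
  assumes G: "graph V E" and G_connected: "connected_graph V E" and card_V: "2 \<le> card V"
    and H: "\<And>u. u \<in> V \<Longrightarrow> graph (VH u) (EH u)"
    and H_nonempty: "\<And>u. u \<in> V \<Longrightarrow> nonempty_graph (VH u) (EH u)"
begin

abbreviation "PV \<equiv> lex_V V VH"
abbreviation "PE \<equiv> lex_E V E VH EH"

lemma PV_iff: "(u, a) \<in> PV \<longleftrightarrow> u \<in> V \<and> a \<in> VH u"
  unfolding lex_V_def by auto

lemma PE_iff:
  "PE (u, a) (v, b) \<longleftrightarrow> u \<in> V \<and> a \<in> VH u \<and> v \<in> V \<and> b \<in> VH v \<and> (E u v \<or> u = v \<and> EH u a b)"
  unfolding lex_E_def by auto

lemma graph_lex: "graph PV PE"
proof -
  obtain u where u: "u \<in> V" using card_V by fastforce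
  then obtain a where "a \<in> VH u" using H unfolding graph_def by blast
  then have "PV \<noteq> {}" using u unfolding lex_V_def by blast
  moreover have "finite PV" unfolding lex_V_def using graphD(1)[OF G] graphD(1)[OF H] by auto
  moreover have "PE (v, b) (u, a)" if "PE (u, a) (v, b)" for u a v b
  proof -
    have h: "u \<in> V" "a \<in> VH u" "v \<in> V" "b \<in> VH v" "E u v \<or> u = v \<and> EH u a b"
      using that by (auto simp: PE_iff)
    then have "E v u \<or> v = u \<and> EH v b a"
      using graphD(4)[OF G, of u v] graphD(4)[OF H[OF h(1)], of a b] by blast
    with h show ?thesis by (simp add: PE_iff)
  qed
  then have "PE p q \<Longrightarrow> PE q p" for p q by (cases p, cases q) blast
  moreover have "\<not> PE (u, a) (u, a)" for u a
    using graphD(5)[OF G, of u] graphD(5)[OF H, of u a] by (auto simp: PE_iff)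
  then have "\<not> PE p p" for p by (cases p) blast
  moreover have "PE p q \<Longrightarrow> p \<in> PV \<and> q \<in> PV" for p q unfolding lex_E_def lex_V_def by blast
  ultimately show ?thesis unfolding graph_def by blast
qed

lemma gdist_lex_eq_1_iff: "gdist PV PE p q = 1 \<longleftrightarrow> PE p q"
  by (rule gdist_eq_1_iff[OF graph_lex])

lemma neighbour_exists:
  assumes "u \<in> V"
  obtains w where "E u w"
proof -
  have "\<not> V \<subseteq> {u}" using card_V card_mono[of "{u}" V] by auto
  then obtain v where v: "v \<in> V" "v \<noteq> u" by blast
  then have "gdist V E v u \<noteq> \<infinity>" using G_connected assms unfolding connected_graph_def by blast
  then show ?thesis using gdist_finite_imp_neighbour v(2) that graphD(4)[OF G] by metis
qed

text \<open>Within a layer every distance is at most 2, via any vertex of a neighbouring layer.\<close>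

lemma gdist_lex_same_layer:
  assumes u: "u \<in> V" and "c \<in> VH u" and "a \<in> VH u"
  shows "gdist PV PE (u, c) (u, a) = gdist2 (VH u) (EH u) c a"
proof -
  obtain w where w: "E u w" using neighbour_exists[OF u] .
  then have "w \<in> V" "E w u" using graphD(3,4)[OF G] by blast+
  moreover obtain z where "z \<in> VH w" using H[OF \<open>w \<in> V\<close>] unfolding graph_def by blast
  ultimately have "walk_len PV PE (u, c) (u, a) (Suc (Suc 0))"
    using assms w unfolding walk_len_Suc_iff walk_len_0_iff
    by (intro exI[of _ "(w, z)"]) (auto simp: PE_iff PV_iff)
  then have "gdist PV PE (u, c) (u, a) \<le> 2"
    using gdist_le_walk by (metis numeral_2_eq_2 numeral_eq_enat)
  then have "gdist PV PE (u, c) (u, a) = gdist2 PV PE (u, c) (u, a)"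
    unfolding gdist2_def by simp
  also have "\<dots> = gdist2 (VH u) (EH u) c a"
    unfolding gdist2_eq[OF graph_lex] gdist2_eq[OF H[OF u]]
    using assms graphD(5)[OF G] by (simp add: PE_iff PV_iff)
  finally show ?thesis .
qed

text \<open>Layers \<open>u, v\<close> with the same neighbours outside \<open>{u, v}\<close> look alike from outside:
  the last step of a walk that enters them from outside can be redirected to any vertex of either.\<close>

lemma walk_len_lex_redirect:
  assumes same: "\<forall>z. z \<noteq> u \<and> z \<noteq> v \<longrightarrow> (E z u \<longleftrightarrow> E z v)" and "u \<in> V" and "v \<in> V"
    and s: "fst s \<noteq> u" "fst s \<noteq> v"
  shows "walk_len PV PE s (t, a) n \<Longrightarrow> t \<in> {u, v} \<Longrightarrow> t' \<in> {u, v} \<Longrightarrow> b \<in> VH t'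
     \<Longrightarrow> \<exists>m\<le>n. walk_len PV PE s (t', b) m"
proof (induction n arbitrary: t a)
  case 0
  then show ?case using s by (auto simp: walk_len_0_iff)
next
  case (Suc n)
  then obtain p where p: "walk_len PV PE s p n" "PE p (t, a)" by (auto simp: walk_len_Suc_iff)
  show ?case
  proof (cases "fst p \<in> {u, v}")
    case True
    with Suc.IH[of "fst p" "snd p"] p(1) Suc.prems(3,4) show ?thesis by (auto intro: le_SucI)
  next
    case False
    obtain z c where pz: "p = (z, c)" by (cases p)
    have "E z t" using p(2) False Suc.prems(2) pz by (auto simp: PE_iff)
    then have "PE p (t', b)" using p(2) same False Suc.prems(2-4) assms(2,3) pz by (auto simp: PE_iff)
    moreover have "(t', b) \<in> PV" using Suc.prems(3,4) assms(2,3) by (auto simp: PV_iff)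
    ultimately have "walk_len PV PE s (t', b) (Suc n)" using p(1) unfolding walk_len_Suc_iff by blast
    then show ?thesis by blast
  qed
qed

lemma gdist_lex_outside_eq:
  assumes "\<forall>z. z \<noteq> u \<and> z \<noteq> v \<longrightarrow> (E z u \<longleftrightarrow> E z v)" and "u \<in> V" and "v \<in> V"
    and "fst s \<noteq> u" and "fst s \<noteq> v" and "a \<in> VH u" and "b \<in> VH v"
  shows "gdist PV PE s (u, a) = gdist PV PE s (v, b)"
proof (rule antisym)
  show "gdist PV PE s (u, a) \<le> gdist PV PE s (v, b)"
    by (rule gdist_mono_walks) (rule walk_len_lex_redirect[OF assms(1-5)], auto simp: assms(6))
  show "gdist PV PE s (v, b) \<le> gdist PV PE s (u, a)"
    by (rule gdist_mono_walks) (rule walk_len_lex_redirect[OF assms(1-5)], auto simp: assms(7))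
qed

lemma local_resolving_layer_edge:
  assumes S: "local_resolving PV PE S" and u: "u \<in> V" and "EH u x y"
  obtains s where "s \<in> S" "fst s = u" "gdist PV PE s (u, x) \<noteq> gdist PV PE s (u, y)"
proof -
  have xy: "x \<in> VH u" "y \<in> VH u" using graphD(2,3)[OF H[OF u] \<open>EH u x y\<close>] by auto
  then have "PE (u, x) (u, y)" using \<open>EH u x y\<close> u by (simp add: PE_iff)
  then obtain s where "s \<in> S" "gdist PV PE s (u, x) \<noteq> gdist PV PE s (u, y)"
    using S unfolding local_resolving_def by blast
  moreover from this have "fst s = u" using gdist_lex_outside_eq[of u u s x y] u xy by auto
  ultimately show ?thesis using that by blast
qed

lemma local_resolving_meets_layer:
  assumes "local_resolving PV PE S" and u: "u \<in> V"
  obtains t where "(u, t) \<in> S"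
proof -
  obtain x y where "EH u x y" using H_nonempty[OF u] unfolding nonempty_graph_def by blast
  then obtain s where "s \<in> S" "fst s = u" using local_resolving_layer_edge[OF assms] by blast
  then have "(u, snd s) \<in> S" by (cases s) simp
  then show ?thesis by (rule that)
qed

lemma local_resolving_fst_image:
  assumes "local_resolving PV PE S"
  shows "finite S" and "fst ` S = V"
proof -
  have "S \<subseteq> PV" using assms unfolding local_resolving_def by blast
  then show "finite S" using graphD(1)[OF graph_lex] finite_subset by blast
  show "fst ` S = V"
  proof
    show "fst ` S \<subseteq> V" using \<open>S \<subseteq> PV\<close> unfolding lex_V_def by auto
    show "V \<subseteq> fst ` S"
    proof
      fix u assume "u \<in> V"
      then obtain t where "(u, t) \<in> S" using local_resolving_meets_layer[OF assms] by blast
      then show "u \<in> fst ` S" by (metis fst_conv image_eqI)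
    qed
  qed
qed

lemma local_metric_dim_eq_card_iff_exists:
  "local_metric_dim PV PE = card V \<longleftrightarrow> (\<exists>S. local_resolving PV PE S \<and> card S = card V)"
proof -
  have lower: "card V \<le> card S" if S: "local_resolving PV PE S" for S
  proof -
    have "card V = card (fst ` S)" using local_resolving_fst_image(2)[OF S] by simp
    also have "\<dots> \<le> card S" using card_image_le[OF local_resolving_fst_image(1)[OF S]] .
    finally show ?thesis .
  qed
  have "\<exists>s\<in>PV. gdist PV PE s p \<noteq> gdist PV PE s q" if "PE p q" for p q
  proof -
    have "p \<in> PV" using graphD(2)[OF graph_lex that] .
    moreover have "gdist PV PE p p = 0" using \<open>p \<in> PV\<close> by (simp add: gdist_eq_0_iff)
    moreover have "gdist PV PE p q = 1" using that by (simp add: gdist_lex_eq_1_iff)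
    ultimately show ?thesis by force
  qed
  then have "local_resolving PV PE PV" unfolding local_resolving_def by blast
  then have "\<exists>k S. local_resolving PV PE S \<and> card S = k" by blast
  from LeastI_ex[OF this] obtain S
    where S: "local_resolving PV PE S" "card S = local_metric_dim PV PE"
    unfolding local_metric_dim_def by blast
  show ?thesis
  proof
    assume "\<exists>S. local_resolving PV PE S \<and> card S = card V"
    then have "local_metric_dim PV PE \<le> card V" unfolding local_metric_dim_def by (rule Least_le)
    then show "local_metric_dim PV PE = card V" using lower[OF S(1)] S(2) by simp
  qed (use S in auto)
qed

lemma local_resolving_card_layer:
  assumes S: "local_resolving PV PE S" and "card S = card V" and u: "u \<in> V"
  obtains t where "(u, t) \<in> S" and "\<forall>s\<in>S. fst s = u \<longrightarrow> s = (u, t)"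
proof -
  have "inj_on fst S"
    using local_resolving_fst_image[OF S] assms(2) by (intro eq_card_imp_inj_on) auto
  obtain t where t: "(u, t) \<in> S" using local_resolving_meets_layer[OF S u] .
  have "s = (u, t)" if "s \<in> S" "fst s = u" for s
    using inj_onD[OF \<open>inj_on fst S\<close> _ that(1) t] that(2) by simp
  then show ?thesis using that t by blast
qed

lemma local_resolving_layer_vertex:
  assumes S: "local_resolving PV PE S" and u: "u \<in> V"
    and "(u, t) \<in> S" and layer: "\<forall>s\<in>S. fst s = u \<longrightarrow> s = (u, t)"
  shows "local_adj_resolving (VH u) (EH u) {t}"
proof -
  have "S \<subseteq> PV" using S unfolding local_resolving_def by blast
  with \<open>(u, t) \<in> S\<close> have t: "t \<in> VH u" using PV_iff by blast
  have "gdist2 (VH u) (EH u) t x \<noteq> gdist2 (VH u) (EH u) t y" if e: "EH u x y" for x y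
  proof -
    obtain s where s: "s \<in> S" "fst s = u" "gdist PV PE s (u, x) \<noteq> gdist PV PE s (u, y)"
      using local_resolving_layer_edge[OF S u e] .
    then have "s = (u, t)" using layer by blast
    moreover have "x \<in> VH u" "y \<in> VH u" using graphD(2,3)[OF H[OF u] e] by auto
    ultimately show ?thesis using s(3) gdist_lex_same_layer[OF u t] by simp
  qed
  then show ?thesis using t unfolding local_adj_resolving_def by blast
qed

text \<open>For true twins \<open>u \<noteq> v\<close>, pick neighbours \<open>a, b\<close> of the chosen vertices in their
  layers: the chosen vertices of both layers are adjacent to both \<open>(u, a)\<close> and \<open>(v, b)\<close>,
  and no other vertex can tell them apart.\<close>

lemma local_resolving_card_no_true_twins:
  assumes S: "local_resolving PV PE S" and card: "card S = card V" and u: "u \<in> V"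
  shows "twin_class V E u = {u}"
proof (rule ccontr)
  assume "twin_class V E u \<noteq> {u}"
  moreover have "u \<in> twin_class V E u" using u unfolding twin_class_def by simp
  ultimately obtain v where v: "v \<in> twin_class V E u" "v \<noteq> u" by blast
  have v_V: "v \<in> V" using v(1) unfolding twin_class_def by simp
  have uv: "E u v" "E v u" using true_twin_adjacent[OF v] graphD(4)[OF G] by blast+
  obtain tu where lu: "(u, tu) \<in> S" "\<forall>s\<in>S. fst s = u \<longrightarrow> s = (u, tu)"
    using local_resolving_card_layer[OF S card u] .
  obtain tv where lv: "(v, tv) \<in> S" "\<forall>s\<in>S. fst s = v \<longrightarrow> s = (v, tv)"
    using local_resolving_card_layer[OF S card v_V] .
  obtain a where a: "EH u a tu"
    using local_adj_resolving_singleton_neighbour[OF H[OF u] H_nonempty[OF u]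
        local_resolving_layer_vertex[OF S u lu(1,2)]] .
  obtain b where b: "EH v b tv"
    using local_adj_resolving_singleton_neighbour[OF H[OF v_V] H_nonempty[OF v_V]
        local_resolving_layer_vertex[OF S v_V lv(1,2)]] .
  have ab: "a \<in> VH u" "tu \<in> VH u" "EH u tu a" "b \<in> VH v" "tv \<in> VH v" "EH v tv b"
    using graphD(2,3,4)[OF H[OF u] a] graphD(2,3,4)[OF H[OF v_V] b] by auto
  then have "PE (u, a) (v, b)" using uv u v_V by (simp add: PE_iff)
  then obtain s where s: "s \<in> S" "gdist PV PE s (u, a) \<noteq> gdist PV PE s (v, b)"
    using S unfolding local_resolving_def by blast
  show False
  proof (cases "fst s = u \<or> fst s = v")
    case True
    then have "s = (u, tu) \<or> s = (v, tv)" using lu(2) lv(2) s(1) by blast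
    then have "PE s (u, a)" "PE s (v, b)" using ab uv u v_V by (auto simp: PE_iff)
    then show False using s(2) gdist_lex_eq_1_iff[of s "(u, a)"] gdist_lex_eq_1_iff[of s "(v, b)"] by simp
  next
    case False
    have "closed_nbhd V E v = closed_nbhd V E u" using v(1) unfolding twin_class_def by simp
    then have "\<forall>z. z \<noteq> u \<and> z \<noteq> v \<longrightarrow> (E z u \<longleftrightarrow> E z v)"
      using closed_nbhd_eq_iff[OF G uv(1)] by simp
    then show False
      using gdist_lex_outside_eq[of u v s a b] False u v_V ab(1,4) s(2) by blast
  qed
qed

lemma local_resolving_of_layer_vertices:
  assumes twins: "\<forall>u\<in>V. twin_class V E u = {u}"
    and \<sigma>: "\<forall>u\<in>V. local_adj_resolving (VH u) (EH u) {\<sigma> u}"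
  shows "local_resolving PV PE ((\<lambda>u. (u, \<sigma> u)) ` V)"
proof -
  have \<sigma>V: "\<sigma> u \<in> VH u" if "u \<in> V" for u using \<sigma> that unfolding local_adj_resolving_def by blast
  have "\<exists>w\<in>V. gdist PV PE (w, \<sigma> w) (u, a) \<noteq> gdist PV PE (w, \<sigma> w) (v, b)"
    if e: "PE (u, a) (v, b)" for u a v b
  proof -
    have h: "u \<in> V" "a \<in> VH u" "v \<in> V" "b \<in> VH v" "E u v \<or> u = v \<and> EH u a b"
      using e by (auto simp: PE_iff)
    show ?thesis
    proof (cases "E u v")
      case False
      then have "u = v" "EH u a b" using h(5) by auto
      then have "gdist2 (VH u) (EH u) (\<sigma> u) a \<noteq> gdist2 (VH u) (EH u) (\<sigma> u) b"
        using \<sigma> h(1) unfolding local_adj_resolving_def by blast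
      then have "gdist PV PE (u, \<sigma> u) (u, a) \<noteq> gdist PV PE (u, \<sigma> u) (v, b)"
        using gdist_lex_same_layer[OF h(1) \<sigma>V[OF h(1)]] h(2,4) \<open>u = v\<close> by simp
      then show ?thesis using h(1) by blast
    next
      case True
      then have "u \<noteq> v" using graphD(5)[OF G] by blast
      then have "v \<notin> twin_class V E u" using twins h(1) by auto
      then have "closed_nbhd V E u \<noteq> closed_nbhd V E v" using h(3) unfolding twin_class_def by auto
      then obtain w where w: "w \<noteq> u" "w \<noteq> v" "E w u \<noteq> E w v"
        using closed_nbhd_eq_iff[OF G True] by blast
      then have "w \<in> V" using graphD(2)[OF G] by blast
      then have "PE (w, \<sigma> w) (u, a) \<noteq> PE (w, \<sigma> w) (v, b)"
        using w h \<sigma>V by (auto simp: PE_iff)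
      then show ?thesis using \<open>w \<in> V\<close> gdist_lex_eq_1_iff by metis
    qed
  qed
  moreover have "(\<lambda>u. (u, \<sigma> u)) ` V \<subseteq> PV" using \<sigma>V by (auto simp: PV_iff)
  ultimately show ?thesis unfolding local_resolving_def by fastforce
qed

lemma local_metric_dim_eq_card_iff:
  "local_metric_dim PV PE = card V \<longleftrightarrow>
    (\<forall>u\<in>V. twin_class V E u = {u}) \<and> (\<forall>u\<in>V. \<exists>t. local_adj_resolving (VH u) (EH u) {t})"
proof
  assume "local_metric_dim PV PE = card V"
  then obtain S where S: "local_resolving PV PE S" "card S = card V"
    using local_metric_dim_eq_card_iff_exists by blast
  have "\<exists>t. local_adj_resolving (VH u) (EH u) {t}" if u: "u \<in> V" for u
  proof -
    obtain t where "(u, t) \<in> S" "\<forall>s\<in>S. fst s = u \<longrightarrow> s = (u, t)"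
      using local_resolving_card_layer[OF S u] .
    then show ?thesis using local_resolving_layer_vertex[OF S(1) u] by blast
  qed
  then show "(\<forall>u\<in>V. twin_class V E u = {u}) \<and> (\<forall>u\<in>V. \<exists>t. local_adj_resolving (VH u) (EH u) {t})"
    using local_resolving_card_no_true_twins[OF S] by blast
next
  assume A: "(\<forall>u\<in>V. twin_class V E u = {u}) \<and> (\<forall>u\<in>V. \<exists>t. local_adj_resolving (VH u) (EH u) {t})"
  from A have twins: "\<forall>u\<in>V. twin_class V E u = {u}" by (rule conjunct1)
  from A have "\<forall>u\<in>V. \<exists>t. local_adj_resolving (VH u) (EH u) {t}" by (rule conjunct2)
  from bchoice[OF this] obtain \<sigma> where \<sigma>: "\<forall>u\<in>V. local_adj_resolving (VH u) (EH u) {\<sigma> u}"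
    by blast
  have "local_resolving PV PE ((\<lambda>u. (u, \<sigma> u)) ` V)"
    by (rule local_resolving_of_layer_vertices[OF twins \<sigma>])
  moreover have "card ((\<lambda>u. (u, \<sigma> u)) ` V) = card V" by (simp add: card_image inj_on_def)
  ultimately show "local_metric_dim PV PE = card V"
    using local_metric_dim_eq_card_iff_exists by blast
qed

end

theorem theorem3:
  fixes V :: "'a set" and E :: "'a \<Rightarrow> 'a \<Rightarrow> bool"
    and VH :: "'a \<Rightarrow> 'b set" and EH :: "'a \<Rightarrow> 'b \<Rightarrow> 'b \<Rightarrow> bool"
  assumes "graph V E" and "connected_graph V E" and "card V \<ge> 2"
    and "\<And>u. u \<in> V \<Longrightarrow> graph (VH u) (EH u)"
    and "\<And>u. u \<in> V \<Longrightarrow> nonempty_graph (VH u) (EH u)"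
  shows "local_metric_dim (lex_V V VH) (lex_E V E VH EH) = card V \<longleftrightarrow>
    ((\<forall>u\<in>V. card {v \<in> twin_class V E u. in_class_G (VH v) (EH v)} \<le> 1) \<and>
     (\<forall>u\<in>V. bipartite (VH u) (EH u) \<and>
        (\<exists>!C. component (VH u) (EH u) C \<and> card C \<ge> 2) \<and>
        (\<forall>C. component (VH u) (EH u) C \<and> card C \<ge> 2 \<longrightarrow>
              radius C (induced (EH u) C) \<le> 2)))"
    (is "?dim \<longleftrightarrow> ?twins \<and> ?factors")
proof -
  interpret lex_product V E VH EH using assms by unfold_locales
  let ?dim_one = "\<forall>u\<in>V. \<exists>t. local_adj_resolving (VH u) (EH u) {t}"
  let ?no_twins = "\<forall>u\<in>V. twin_class V E u = {u}"
  have factors: "?factors \<longleftrightarrow> ?dim_one"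
    by (intro ball_cong) (simp_all add: local_adj_resolving_singleton_iff[OF H H_nonempty])
  have factors_in_G: "\<forall>v\<in>V. in_class_G (VH v) (EH v)" if ?dim_one
    using that in_class_G_if_local_adj_resolving_singleton[OF H H_nonempty] by blast
  show ?thesis
  proof
    assume ?dim
    then have no_twins: ?no_twins and ?dim_one using local_metric_dim_eq_card_iff by blast+
    have ?twins by (intro ballI card_twin_class_Collect_le_1) (use no_twins in blast)
    with \<open>?dim_one\<close> show "?twins \<and> ?factors" using factors by blast
  next
    assume "?twins \<and> ?factors"
    then have ?twins ?dim_one using factors by blast+
    then have ?no_twins using twin_class_eq_singleton_iff[OF G _ factors_in_G] by blast
    then show ?dim using local_metric_dim_eq_card_iff \<open>?dim_one\<close> by blast
  qed
qed

end
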